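(* $\widetilde{\mathbb{R}}_{sm}$, with the partial order $\le$ and with join $r\vee s=\max(r,s)$ and meet $r\wedge s=\min(r,s)$, is an $l$-ring (a partially ordered ring that is a lattice for its order).
   Context: Let $I=(0,1]$. $\widetilde{\mathbb{R}}_{sm}=\mathcal{E}_{M,sm}/\mathcal{N}_{sm}$ where $\mathcal{E}_{M,sm}$ is the set of smooth $(r_\varepsilon)_{\varepsilon\in I}\in\mathbb{R}^I$ with $|r_\varepsilon|=O(\varepsilon^{-N})$ for some $N$, and $\mathcal{N}_{sm}$ those smooth nets with $|r_\varepsilon|=O(\varepsilon^m)$ for all $m$. Similarly $\widetilde{\mathbb{R}}_{co}$ is defined with continuous nets; the natural map $\tau_{sm}:\widetilde{\mathbb{R}}_{sm}\to\widetilde{\mathbb{R}}_{co}$, $[(r_\varepsilon)]\mapsto[(r_\varepsilon)]$, is a ring isomorphism. For $r,s\in\widetilde{\mathbb{R}}_{sm}$, $r\le s$ means there are representatives with $r_\varepsilon\le s_\varepsilon$ for all $\varepsilon\in I$. For $r=[(r_\varepsilon)_\varepsilon]$, $s=[(s_\varepsilon)_\varepsilon]$: $\min(r,s)=\tau_{sm}^{-1}([(\min(r_\varepsilon,s_\varepsilon))_\varepsilon])$, $\max(r,s)=\tau_{sm}^{-1}([(\max(r_\varepsilon,s_\varepsilon))_\varepsilon])$. *)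

theory Defs
  imports Complex_Main "HOL-Algebra.Ring" "HOL-Algebra.Lattice"
begin

text \<open>Nets are functions real => real; only their values on I = (0,1] matter.\<close>

definition netI :: "real set" where "netI = {0<..1}"

text \<open>Smooth (C-infinity) on I = (0,1]: a sequence of successive derivatives exists on I
  (one-sided at the endpoint 1).\<close>
definition smooth_net :: "(real \<Rightarrow> real) \<Rightarrow> bool" where
  "smooth_net r \<longleftrightarrow> (\<exists>D :: nat \<Rightarrow> real \<Rightarrow> real.
      (\<forall>x\<in>netI. D 0 x = r x) \<and>
      (\<forall>n. \<forall>x\<in>netI. (D n has_real_derivative D (Suc n) x) (at x within netI)))"

definition cont_net :: "(real \<Rightarrow> real) \<Rightarrow> bool" where
  "cont_net r \<longleftrightarrow> continuous_on netI r"

definition moderate :: "(real \<Rightarrow> real) \<Rightarrow> bool" where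
  "moderate r \<longleftrightarrow> (\<exists>N::nat. \<exists>C e0. e0 > 0 \<and>
      (\<forall>e\<in>{0<..e0} \<inter> netI. \<bar>r e\<bar> \<le> C * inverse (e ^ N)))"

definition negligible :: "(real \<Rightarrow> real) \<Rightarrow> bool" where
  "negligible r \<longleftrightarrow> (\<forall>m::nat. \<exists>C e0. e0 > 0 \<and>
      (\<forall>e\<in>{0<..e0} \<inter> netI. \<bar>r e\<bar> \<le> C * e ^ m))"

definition E_sm :: "(real \<Rightarrow> real) set" where
  "E_sm = {r. smooth_net r \<and> moderate r}"

definition E_co :: "(real \<Rightarrow> real) set" where
  "E_co = {r. cont_net r \<and> moderate r}"

definition sm_class :: "(real \<Rightarrow> real) \<Rightarrow> (real \<Rightarrow> real) set" where
  "sm_class r = {s. s \<in> E_sm \<and> r \<in> E_sm \<and> negligible (\<lambda>e. r e - s e)}"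

definition co_class :: "(real \<Rightarrow> real) \<Rightarrow> (real \<Rightarrow> real) set" where
  "co_class r = {s. s \<in> E_co \<and> r \<in> E_co \<and> negligible (\<lambda>e. r e - s e)}"

text \<open>The quotients E_sm / N_sm and E_co / N_co, as sets of equivalence classes.\<close>
definition R_sm :: "(real \<Rightarrow> real) set set" where
  "R_sm = sm_class ` E_sm"

definition R_co :: "(real \<Rightarrow> real) set set" where
  "R_co = co_class ` E_co"

definition sm_add :: "(real \<Rightarrow> real) set \<Rightarrow> (real \<Rightarrow> real) set \<Rightarrow> (real \<Rightarrow> real) set" where
  "sm_add X Y = (\<Union>x\<in>X. \<Union>y\<in>Y. sm_class (\<lambda>e. x e + y e))"

definition sm_mult :: "(real \<Rightarrow> real) set \<Rightarrow> (real \<Rightarrow> real) set \<Rightarrow> (real \<Rightarrow> real) set" where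
  "sm_mult X Y = (\<Union>x\<in>X. \<Union>y\<in>Y. sm_class (\<lambda>e. x e * y e))"

definition R_sm_ring :: "(real \<Rightarrow> real) set ring" where
  "R_sm_ring = \<lparr> carrier = R_sm, mult = sm_mult, one = sm_class (\<lambda>_. 1),
                 zero = sm_class (\<lambda>_. 0), add = sm_add \<rparr>"

definition sm_le :: "(real \<Rightarrow> real) set \<Rightarrow> (real \<Rightarrow> real) set \<Rightarrow> bool" where
  "sm_le X Y \<longleftrightarrow> (\<exists>x\<in>X. \<exists>y\<in>Y. \<forall>e\<in>netI. x e \<le> y e)"

definition R_sm_order :: "(real \<Rightarrow> real) set gorder" where
  "R_sm_order = \<lparr> carrier = R_sm, eq = (=), le = sm_le \<rparr>"

definition tau_sm :: "(real \<Rightarrow> real) set \<Rightarrow> (real \<Rightarrow> real) set" where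
  "tau_sm X = (\<Union>x\<in>X. co_class x)"

definition sm_max :: "(real \<Rightarrow> real) set \<Rightarrow> (real \<Rightarrow> real) set \<Rightarrow> (real \<Rightarrow> real) set" where
  "sm_max X Y = the_inv_into R_sm tau_sm (\<Union>x\<in>X. \<Union>y\<in>Y. co_class (\<lambda>e. max (x e) (y e)))"

definition sm_min :: "(real \<Rightarrow> real) set \<Rightarrow> (real \<Rightarrow> real) set \<Rightarrow> (real \<Rightarrow> real) set" where
  "sm_min X Y = the_inv_into R_sm tau_sm (\<Union>x\<in>X. \<Union>y\<in>Y. co_class (\<lambda>e. min (x e) (y e)))"

end

theory Submission
  imports Defs
begin

text \<open>All order questions reduce to representatives: [a] \<le> [b] holds exactly when the positive
  part max (a - b) 0 is negligible, so the ordered-ring axioms become pointwise estimates for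
  negligible nets. The pointwise max and min of smooth nets are only continuous; they are replaced
  by (a + b \<plusminus> sqrt ((a - b)^2 + w^2)) / 2 with the flat net w e = exp (-1/e), which is smooth,
  positive and negligible. These smoothed nets differ from max and min by at most w, hence have the
  same class in R_co, and they are the join and meet in R_sm.\<close>

section \<open>Higher derivatives\<close>

fun differentiable_upto :: "nat \<Rightarrow> real set \<Rightarrow> (real \<Rightarrow> real) \<Rightarrow> bool" where
  "differentiable_upto 0 S f = True"
| "differentiable_upto (Suc n) S f =
     (\<exists>f'. (\<forall>x\<in>S. (f has_real_derivative f' x) (at x within S)) \<and> differentiable_upto n S f')"

lemma differentiable_uptoI:
  "(\<And>x. x \<in> S \<Longrightarrow> (f has_real_derivative f' x) (at x within S)) \<Longrightarrow> differentiable_upto n S f'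
    \<Longrightarrow> differentiable_upto (Suc n) S f"
  by auto

lemma differentiable_upto_SucD: "differentiable_upto (Suc n) S f \<Longrightarrow> differentiable_upto n S f"
proof (induction n arbitrary: f)
  case (Suc n)
  then obtain f' where "\<forall>x\<in>S. (f has_real_derivative f' x) (at x within S)"
    and "differentiable_upto (Suc n) S f'" by auto
  with Suc.IH show ?case by (intro differentiable_uptoI[where f'=f']) auto
qed simp

lemma differentiable_upto_cong:
  "differentiable_upto n S f \<Longrightarrow> (\<And>x. x \<in> S \<Longrightarrow> f x = g x) \<Longrightarrow> differentiable_upto n S g"
proof (induction n arbitrary: f g)
  case (Suc n)
  then obtain f' where f': "\<forall>x\<in>S. (f has_real_derivative f' x) (at x within S)"
    and "differentiable_upto n S f'" by auto
  moreover have "(g has_real_derivative f' x) (at x within S)" if "x \<in> S" for x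
    using has_field_derivative_transform_within[OF f'[rule_format, OF that] zero_less_one that]
      Suc.prems by simp
  ultimately show ?case by auto
qed simp

lemma differentiable_upto_const: "differentiable_upto n S (\<lambda>_. c)"
proof (induction n arbitrary: c)
  case (Suc n)
  then show ?case by (intro differentiable_uptoI[where f'="\<lambda>_. 0"]) auto
qed simp

lemma differentiable_upto_add:
  "differentiable_upto n S f \<Longrightarrow> differentiable_upto n S g \<Longrightarrow> differentiable_upto n S (\<lambda>x. f x + g x)"
proof (induction n arbitrary: f g)
  case (Suc n)
  then obtain f' g' where
    "\<forall>x\<in>S. (f has_real_derivative f' x) (at x within S)" "differentiable_upto n S f'"
    "\<forall>x\<in>S. (g has_real_derivative g' x) (at x within S)" "differentiable_upto n S g'" by auto
  with Suc.IH show ?case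
    by (intro differentiable_uptoI[where f'="\<lambda>x. f' x + g' x"]) (auto intro!: derivative_eq_intros)
qed simp

lemma differentiable_upto_mult:
  "differentiable_upto n S f \<Longrightarrow> differentiable_upto n S g \<Longrightarrow> differentiable_upto n S (\<lambda>x. f x * g x)"
proof (induction n arbitrary: f g)
  case (Suc n)
  then obtain f' g' where
    df: "\<forall>x\<in>S. (f has_real_derivative f' x) (at x within S)" and f': "differentiable_upto n S f'" and
    dg: "\<forall>x\<in>S. (g has_real_derivative g' x) (at x within S)" and g': "differentiable_upto n S g'"
    by auto
  have "differentiable_upto n S (\<lambda>x. f' x * g x + f x * g' x)"
    using differentiable_upto_SucD[OF Suc.prems(1)] differentiable_upto_SucD[OF Suc.prems(2)]
    by (intro differentiable_upto_add Suc.IH f' g')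
  then show ?case
    using df dg by (intro differentiable_uptoI[where f'="\<lambda>x. f' x * g x + f x * g' x"])
      (auto intro!: derivative_eq_intros simp: algebra_simps)
qed simp

lemma differentiable_upto_cmult: "differentiable_upto n S f \<Longrightarrow> differentiable_upto n S (\<lambda>x. c * f x)"
  by (rule differentiable_upto_mult[OF differentiable_upto_const])

lemma differentiable_upto_diff:
  "differentiable_upto n S f \<Longrightarrow> differentiable_upto n S g \<Longrightarrow> differentiable_upto n S (\<lambda>x. f x - g x)"
  using differentiable_upto_add[OF _ differentiable_upto_cmult[of n S g "-1"], of f] by simp

lemma differentiable_upto_subset:
  "differentiable_upto n T f \<Longrightarrow> S \<subseteq> T \<Longrightarrow> differentiable_upto n S f"
proof (induction n arbitrary: f)
  case (Suc n)
  then obtain f' where "\<forall>x\<in>T. (f has_real_derivative f' x) (at x within T)"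
    and "differentiable_upto n T f'" by auto
  with Suc show ?case by (intro differentiable_uptoI[where f'=f']) (auto intro: DERIV_subset)
qed simp

lemma differentiable_upto_compose:
  assumes "open T"
  shows "differentiable_upto n T h \<Longrightarrow> differentiable_upto n S g \<Longrightarrow> (\<And>x. x \<in> S \<Longrightarrow> g x \<in> T)
    \<Longrightarrow> differentiable_upto n S (\<lambda>x. h (g x))"
proof (induction n arbitrary: h g)
  case (Suc n)
  then obtain h' g' where
    dh: "\<forall>y\<in>T. (h has_real_derivative h' y) (at y within T)" and h': "differentiable_upto n T h'" and
    dg: "\<forall>x\<in>S. (g has_real_derivative g' x) (at x within S)" and g': "differentiable_upto n S g'"
    by auto
  have "((\<lambda>x. h (g x)) has_real_derivative h' (g x) * g' x) (at x within S)" if "x \<in> S" for x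
  proof -
    have "g x \<in> T" using Suc.prems(3)[OF that] .
    then have "(h has_real_derivative h' (g x)) (at (g x))"
      using dh at_within_open[OF _ assms] by metis
    then show ?thesis using dg that by (blast intro: DERIV_chain2)
  qed
  moreover have "differentiable_upto n S (\<lambda>x. h' (g x) * g' x)"
    using Suc.IH[OF h' differentiable_upto_SucD[OF Suc.prems(2)] Suc.prems(3)] g'
    by (rule differentiable_upto_mult)
  ultimately show ?case by (intro differentiable_uptoI)
qed simp

lemma differentiable_upto_exp: "differentiable_upto n UNIV exp"
  by (induction n) (auto intro!: differentiable_uptoI[where f'=exp] DERIV_exp)

lemma differentiable_upto_inverse: "differentiable_upto n {0<..} inverse"
proof (induction n)
  case (Suc n)
  have "(inverse has_real_derivative - (inverse x * inverse x)) (at x within {0<..})"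
    if "x \<in> {0<..}" for x :: real
    using that by (auto intro!: derivative_eq_intros simp: power2_eq_square)
  moreover have "differentiable_upto n {0<..} (\<lambda>x. -1 * (inverse x * inverse x))"
    using Suc by (intro differentiable_upto_cmult differentiable_upto_mult)
  ultimately show ?case by (intro differentiable_uptoI) auto
qed simp

lemma differentiable_upto_sqrt: "differentiable_upto n {0<..} sqrt"
proof (induction n)
  case (Suc n)
  have "(sqrt has_real_derivative inverse (sqrt x) / 2) (at x within {0<..})" if "x \<in> {0<..}" for x
    using that by (simp add: DERIV_real_sqrt has_field_derivative_at_within)
  moreover have "differentiable_upto n {0<..} (\<lambda>x. 1 / 2 * inverse (sqrt x))"
    by (intro differentiable_upto_cmult
        differentiable_upto_compose[OF open_greaterThan differentiable_upto_inverse Suc]) auto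
  ultimately show ?case by (intro differentiable_uptoI) auto
qed simp

lemma at_within_netI_nontrivial: "x \<in> netI \<Longrightarrow> at x within netI \<noteq> bot"
proof -
  assume "x \<in> netI"
  then have "at x within {0<..<x} \<le> at x within netI" "at x within {..<x} = at x within {0<..<x}"
    by (auto simp: netI_def intro!: at_le at_within_nhd[of _ "{0<..}"])
  then show ?thesis using trivial_limit_at_left_real[of x] by (metis bot.extremum_uniqueI)
qed

lemma smooth_net_iff: "smooth_net f \<longleftrightarrow> (\<forall>n. differentiable_upto n netI f)"
proof
  assume "smooth_net f"
  then obtain D where D0: "\<forall>x\<in>netI. D 0 x = f x"
    and DS: "\<forall>n. \<forall>x\<in>netI. (D n has_real_derivative D (Suc n) x) (at x within netI)"
    unfolding smooth_net_def by blast
  have "\<forall>k. differentiable_upto n netI (D k)" for n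
  proof (induction n)
    case (Suc n)
    with DS show ?case by (auto intro!: differentiable_uptoI[where f'="D (Suc _)"])
  qed simp
  then show "\<forall>n. differentiable_upto n netI f" using D0 differentiable_upto_cong by metis
next
  let ?smooth = "\<lambda>g. \<forall>n. differentiable_upto n netI g"
  assume "?smooth f"
  have "\<exists>g'. ?smooth g' \<and> (\<forall>x\<in>netI. (g has_real_derivative g' x) (at x within netI))"
    if g: "?smooth g" for g
  proof -
    obtain g' where dg': "\<forall>x\<in>netI. (g has_real_derivative g' x) (at x within netI)"
      using g[rule_format, of 1] by auto
    \<comment> \<open>the first derivatives supplied for different orders agree, as derivatives within netI are unique\<close>
    have "differentiable_upto n netI g'" for n
    proof -
      obtain g'' where dg'': "\<forall>x\<in>netI. (g has_real_derivative g'' x) (at x within netI)"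
        and "differentiable_upto n netI g''"
        using g[rule_format, of "Suc n"] by auto
      then show ?thesis
        using dg' has_field_derivative_unique at_within_netI_nontrivial
        by (metis differentiable_upto_cong)
    qed
    with dg' show ?thesis by blast
  qed
  then obtain D where "\<forall>n. (?smooth (D n) \<and> (n = 0 \<longrightarrow> D n = f)) \<and>
      (\<forall>x\<in>netI. (D n has_real_derivative D (Suc n) x) (at x within netI))"
    using dependent_nat_choice[of "\<lambda>n g. ?smooth g \<and> (n = 0 \<longrightarrow> g = f)"
        "\<lambda>_ g g'. \<forall>x\<in>netI. (g has_real_derivative g' x) (at x within netI)"] \<open>?smooth f\<close>
    by blast
  then show "smooth_net f" unfolding smooth_net_def by (intro exI[of _ D]) auto
qed

section \<open>Moderate and negligible nets\<close>

lemma negligible_le: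
  assumes "negligible g" and "\<And>e. e \<in> netI \<Longrightarrow> \<bar>f e\<bar> \<le> g e"
  shows "negligible f"
  unfolding negligible_def
proof
  fix m
  obtain C e0 where "e0 > 0" and g: "\<forall>e\<in>{0<..e0} \<inter> netI. \<bar>g e\<bar> \<le> C * e ^ m"
    using assms(1) unfolding negligible_def by blast
  moreover have "\<bar>f e\<bar> \<le> C * e ^ m" if "e \<in> {0<..e0} \<inter> netI" for e
    using assms(2)[of e] g that abs_ge_self[of "g e"] by force
  ultimately show "\<exists>C e0. e0 > 0 \<and> (\<forall>e\<in>{0<..e0} \<inter> netI. \<bar>f e\<bar> \<le> C * e ^ m)"
    by blast
qed

lemma negligible_abs_iff [simp]: "negligible (\<lambda>e. \<bar>f e\<bar>) \<longleftrightarrow> negligible f"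
  by (simp add: negligible_def)

lemma negligible_zero [simp]: "negligible (\<lambda>_. 0)"
  unfolding negligible_def by (auto intro!: exI[of _ 1])

lemma negligible_add:
  assumes "negligible f" and "negligible g"
  shows "negligible (\<lambda>e. f e + g e)"
  unfolding negligible_def
proof
  fix m
  obtain C1 e1 where 1: "e1 > 0" "\<forall>e\<in>{0<..e1} \<inter> netI. \<bar>f e\<bar> \<le> C1 * e ^ m"
    using assms(1) unfolding negligible_def by blast
  obtain C2 e2 where 2: "e2 > 0" "\<forall>e\<in>{0<..e2} \<inter> netI. \<bar>g e\<bar> \<le> C2 * e ^ m"
    using assms(2) unfolding negligible_def by blast
  have "\<bar>f e + g e\<bar> \<le> (C1 + C2) * e ^ m" if "e \<in> {0<..min e1 e2} \<inter> netI" for e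
  proof -
    have "\<bar>f e\<bar> \<le> C1 * e ^ m" "\<bar>g e\<bar> \<le> C2 * e ^ m" using 1(2) 2(2) that by auto
    then show ?thesis unfolding distrib_right by (rule order_trans[OF abs_triangle_ineq add_mono])
  qed
  with 1(1) 2(1) show "\<exists>C e0. e0 > 0 \<and> (\<forall>e\<in>{0<..e0} \<inter> netI. \<bar>f e + g e\<bar> \<le> C * e ^ m)"
    by (intro exI[of _ "C1 + C2"] exI[of _ "min e1 e2"]) auto
qed

lemma negligible_minus_commute: "negligible (\<lambda>e. f e - g e) \<longleftrightarrow> negligible (\<lambda>e. g e - f e)"
  using negligible_abs_iff[of "\<lambda>e. f e - g e"] negligible_abs_iff[of "\<lambda>e. g e - f e"]
  by (simp add: abs_minus_commute)

lemma moderate_le: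
  assumes "moderate g" and "\<And>e. e \<in> netI \<Longrightarrow> \<bar>f e\<bar> \<le> g e"
  shows "moderate f"
proof -
  obtain N C e0 where "e0 > 0" and g: "\<forall>e\<in>{0<..e0} \<inter> netI. \<bar>g e\<bar> \<le> C * inverse (e ^ N)"
    using assms(1) unfolding moderate_def by blast
  moreover have "\<bar>f e\<bar> \<le> C * inverse (e ^ N)" if "e \<in> {0<..e0} \<inter> netI" for e
    using assms(2)[of e] g that abs_ge_self[of "g e"] by force
  ultimately show ?thesis unfolding moderate_def by blast
qed

lemma moderate_abs_iff [simp]: "moderate (\<lambda>e. \<bar>f e\<bar>) \<longleftrightarrow> moderate f"
  by (simp add: moderate_def)

lemma moderate_const: "moderate (\<lambda>_. c)"
  unfolding moderate_def by (intro exI[of _ 0] exI[of _ "\<bar>c\<bar>"] exI[of _ 1]) auto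

lemma moderate_mult:
  assumes "moderate f" and "moderate g"
  shows "moderate (\<lambda>e. f e * g e)"
proof -
  obtain N1 C1 e1 where 1: "e1 > 0" "\<forall>e\<in>{0<..e1} \<inter> netI. \<bar>f e\<bar> \<le> C1 * inverse (e ^ N1)"
    using assms(1) unfolding moderate_def by blast
  obtain N2 C2 e2 where 2: "e2 > 0" "\<forall>e\<in>{0<..e2} \<inter> netI. \<bar>g e\<bar> \<le> C2 * inverse (e ^ N2)"
    using assms(2) unfolding moderate_def by blast
  have "\<bar>f e * g e\<bar> \<le> (C1 * C2) * inverse (e ^ (N1 + N2))" if "e \<in> {0<..min e1 e2} \<inter> netI" for e
  proof -
    have "\<bar>f e * g e\<bar> \<le> (C1 * inverse (e ^ N1)) * (C2 * inverse (e ^ N2))"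
      unfolding abs_mult using 1(2) 2(2) that
      by (intro mult_mono) (auto intro: order_trans[OF abs_ge_zero])
    then show ?thesis by (simp add: power_add algebra_simps)
  qed
  with 1(1) 2(1) show ?thesis unfolding moderate_def
    by (intro exI[of _ "N1 + N2"] exI[of _ "C1 * C2"] exI[of _ "min e1 e2"]) auto
qed

lemma moderate_add:
  assumes "moderate f" and "moderate g"
  shows "moderate (\<lambda>e. f e + g e)"
proof -
  obtain N1 C1 e1 where 1: "e1 > 0" "\<forall>e\<in>{0<..e1} \<inter> netI. \<bar>f e\<bar> \<le> C1 * inverse (e ^ N1)"
    using assms(1) unfolding moderate_def by blast
  obtain N2 C2 e2 where 2: "e2 > 0" "\<forall>e\<in>{0<..e2} \<inter> netI. \<bar>g e\<bar> \<le> C2 * inverse (e ^ N2)"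
    using assms(2) unfolding moderate_def by blast
  have "\<bar>f e + g e\<bar> \<le> (\<bar>C1\<bar> + \<bar>C2\<bar>) * inverse (e ^ (N1 + N2))"
    if e: "e \<in> {0<..min e1 e2} \<inter> netI" for e
  proof -
    have e_pos: "0 < e" using e by auto
    have "\<bar>h e\<bar> \<le> \<bar>C\<bar> * inverse (e ^ (N1 + N2))"
      if "\<bar>h e\<bar> \<le> C * inverse (e ^ N)" "N \<le> N1 + N2" for h C N
    proof -
      have "C * inverse (e ^ N) \<le> \<bar>C\<bar> * inverse (e ^ N)"
        using e_pos by (intro mult_right_mono) auto
      also have "\<dots> \<le> \<bar>C\<bar> * inverse (e ^ (N1 + N2))"
        using e \<open>N \<le> N1 + N2\<close>
        by (intro mult_left_mono le_imp_inverse_le power_decreasing) (auto simp: netI_def)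
      finally show ?thesis using that(1) by linarith
    qed
    moreover have "\<bar>f e\<bar> \<le> C1 * inverse (e ^ N1)" "\<bar>g e\<bar> \<le> C2 * inverse (e ^ N2)"
      using 1(2) 2(2) e by auto
    ultimately have "\<bar>f e\<bar> \<le> \<bar>C1\<bar> * inverse (e ^ (N1 + N2))"
      "\<bar>g e\<bar> \<le> \<bar>C2\<bar> * inverse (e ^ (N1 + N2))"
      by (metis le_add1, metis le_add2)
    then show ?thesis using abs_triangle_ineq[of "f e" "g e"] by (simp add: distrib_right)
  qed
  with 1(1) 2(1) show ?thesis unfolding moderate_def
    by (intro exI[of _ "N1 + N2"] exI[of _ "\<bar>C1\<bar> + \<bar>C2\<bar>"] exI[of _ "min e1 e2"]) auto
qed

lemma negligible_mult_moderate:
  assumes "negligible f" and "moderate g"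
  shows "negligible (\<lambda>e. f e * g e)"
  unfolding negligible_def
proof
  fix m
  obtain N C2 e2 where 2: "e2 > 0" "\<forall>e\<in>{0<..e2} \<inter> netI. \<bar>g e\<bar> \<le> C2 * inverse (e ^ N)"
    using assms(2) unfolding moderate_def by blast
  obtain C1 e1 where 1: "e1 > 0" "\<forall>e\<in>{0<..e1} \<inter> netI. \<bar>f e\<bar> \<le> C1 * e ^ (m + N)"
    using assms(1) unfolding negligible_def by blast
  have "\<bar>f e * g e\<bar> \<le> (C1 * C2) * e ^ m" if "e \<in> {0<..min e1 e2} \<inter> netI" for e
  proof -
    have "\<bar>f e * g e\<bar> \<le> (C1 * e ^ (m + N)) * (C2 * inverse (e ^ N))"
      unfolding abs_mult using 1(2) 2(2) that
      by (intro mult_mono) (auto intro: order_trans[OF abs_ge_zero])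
    then show ?thesis using that by (simp add: power_add field_simps)
  qed
  with 1(1) 2(1) show "\<exists>C e0. e0 > 0 \<and> (\<forall>e\<in>{0<..e0} \<inter> netI. \<bar>f e * g e\<bar> \<le> C * e ^ m)"
    by (intro exI[of _ "C1 * C2"] exI[of _ "min e1 e2"]) auto
qed

section \<open>The algebra of moderate smooth nets\<close>

lemma E_sm_iff: "f \<in> E_sm \<longleftrightarrow> (\<forall>n. differentiable_upto n netI f) \<and> moderate f"
  by (simp add: E_sm_def smooth_net_iff)

lemma E_sm_const [simp]: "(\<lambda>_. c) \<in> E_sm"
  by (simp add: E_sm_iff differentiable_upto_const moderate_const)

lemma E_sm_add [simp]: "a \<in> E_sm \<Longrightarrow> b \<in> E_sm \<Longrightarrow> (\<lambda>e. a e + b e) \<in> E_sm"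
  by (simp add: E_sm_iff differentiable_upto_add moderate_add)

lemma E_sm_mult [simp]: "a \<in> E_sm \<Longrightarrow> b \<in> E_sm \<Longrightarrow> (\<lambda>e. a e * b e) \<in> E_sm"
  by (simp add: E_sm_iff differentiable_upto_mult moderate_mult)

lemma E_sm_uminus [simp]: "a \<in> E_sm \<Longrightarrow> (\<lambda>e. - a e) \<in> E_sm"
  using E_sm_mult[OF E_sm_const[of "-1"]] by simp

lemma E_sm_diff [simp]: "a \<in> E_sm \<Longrightarrow> b \<in> E_sm \<Longrightarrow> (\<lambda>e. a e - b e) \<in> E_sm"
  using E_sm_add[of a "\<lambda>e. - b e"] by simp

lemma E_sm_subset_E_co: "E_sm \<subseteq> E_co"
proof
  fix f assume "f \<in> E_sm"
  then have "differentiable_upto (Suc 0) netI f" "moderate f" by (simp_all add: E_sm_iff)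
  then obtain f' where "\<forall>x\<in>netI. (f has_real_derivative f' x) (at x within netI)" "moderate f"
    by auto
  then show "f \<in> E_co"
    by (auto simp: E_co_def cont_net_def continuous_on_eq_continuous_within dest: DERIV_continuous)
qed

section \<open>Smoothed maximum and minimum\<close>

definition flat_net :: "real \<Rightarrow> real" where
  "flat_net e = exp (- inverse e)"

lemma flat_net_pos: "0 < flat_net e"
  by (simp add: flat_net_def)

lemma E_sm_flat_net [simp]: "flat_net \<in> E_sm"
proof -
  have "differentiable_upto n netI (\<lambda>e. exp (-1 * inverse e))" for n
    by (intro differentiable_upto_compose[OF open_UNIV differentiable_upto_exp]
        differentiable_upto_cmult differentiable_upto_subset[OF differentiable_upto_inverse])
      (auto simp: netI_def)
  moreover have "moderate flat_net"
    by (rule moderate_le[OF moderate_const[of 1]]) (auto simp: flat_net_def netI_def)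
  ultimately show ?thesis by (simp add: E_sm_iff flat_net_def[abs_def])
qed

text \<open>From (t/k)^k \<le> exp t with t = 1/e and k = m + 1.\<close>
lemma flat_net_le_power:
  assumes "0 < e" "e \<le> 1"
  shows "flat_net e \<le> real (Suc m) ^ Suc m * e ^ m"
proof -
  let ?k = "real (Suc m)"
  have "inverse (?k * e) \<le> exp (inverse (?k * e))"
    using exp_ge_add_one_self[of "inverse (?k * e)"] by linarith
  then have "inverse (?k * e) ^ Suc m \<le> exp (inverse (?k * e)) ^ Suc m"
    using assms by (intro power_mono) auto
  also have "\<dots> = exp (?k * inverse (?k * e))"
    by (rule exp_of_nat_mult[symmetric])
  also have "\<dots> = exp (inverse e)"
    by (simp add: inverse_mult_distrib)
  finally have "inverse (exp (inverse e)) \<le> inverse (inverse (?k * e) ^ Suc m)"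
    using assms by (intro le_imp_inverse_le) auto
  also have "\<dots> = ?k ^ Suc m * e ^ Suc m"
    by (simp add: power_inverse power_mult_distrib)
  also have "\<dots> \<le> ?k ^ Suc m * e ^ m"
    using assms by (intro mult_left_mono) (auto intro: power_decreasing)
  finally show ?thesis by (simp add: flat_net_def exp_minus)
qed

lemma negligible_flat_net: "negligible flat_net"
  unfolding negligible_def
proof
  fix m
  have "\<bar>flat_net e\<bar> \<le> real (Suc m) ^ Suc m * e ^ m" if "e \<in> {0<..1} \<inter> netI" for e
    using that flat_net_le_power[of e m] flat_net_pos[of e] by auto
  then show "\<exists>C e0. e0 > 0 \<and> (\<forall>e\<in>{0<..e0} \<inter> netI. \<bar>flat_net e\<bar> \<le> C * e ^ m)"
    by (intro exI[of _ "real (Suc m) ^ Suc m"] exI[of _ 1]) auto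
qed

definition smooth_max_real :: "real \<Rightarrow> real \<Rightarrow> real \<Rightarrow> real" where
  "smooth_max_real w a b = (a + b + sqrt ((a - b)\<^sup>2 + w\<^sup>2)) / 2"

lemma max_le_smooth_max_real: "max a b \<le> smooth_max_real w a b"
proof -
  have "max a b \<le> (a + b + s) / 2" if "\<bar>a - b\<bar> \<le> s" for s
    using that by (simp add: abs_le_iff max_def)
  moreover have "\<bar>a - b\<bar> \<le> sqrt ((a - b)\<^sup>2 + w\<^sup>2)"
    by (metis abs_ge_zero le_add_same_cancel1 real_sqrt_abs real_sqrt_le_mono zero_le_power2)
  ultimately show ?thesis unfolding smooth_max_real_def by blast
qed

lemma smooth_max_real_le:
  assumes "0 \<le> w"
  shows "smooth_max_real w a b \<le> max a b + w"
proof -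
  have "(a + b + s) / 2 \<le> max a b + w" if "s \<le> \<bar>a - b\<bar> + w" for s
    using that assms by (auto simp: abs_if max_def split: if_splits)
  moreover have "sqrt ((a - b)\<^sup>2 + w\<^sup>2) \<le> sqrt ((\<bar>a - b\<bar> + w)\<^sup>2)"
    using assms by (intro real_sqrt_le_mono) (simp add: power2_eq_square algebra_simps)
  ultimately show ?thesis using assms unfolding smooth_max_real_def by simp
qed

definition smooth_max :: "(real \<Rightarrow> real) \<Rightarrow> (real \<Rightarrow> real) \<Rightarrow> real \<Rightarrow> real" where
  "smooth_max x y e = smooth_max_real (flat_net e) (x e) (y e)"

definition smooth_min :: "(real \<Rightarrow> real) \<Rightarrow> (real \<Rightarrow> real) \<Rightarrow> real \<Rightarrow> real" where
  "smooth_min x y e = - smooth_max (\<lambda>e. - x e) (\<lambda>e. - y e) e"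

lemma max_le_smooth_max: "max (x e) (y e) \<le> smooth_max x y e"
  unfolding smooth_max_def by (rule max_le_smooth_max_real)

lemma smooth_max_le: "smooth_max x y e \<le> max (x e) (y e) + flat_net e"
  by (simp add: smooth_max_def smooth_max_real_le flat_net_pos less_imp_le)

lemma smooth_min_le_min: "smooth_min x y e \<le> min (x e) (y e)"
  using max_le_smooth_max[where x="\<lambda>e. - x e" and y="\<lambda>e. - y e" and e=e] by (simp add: smooth_min_def)

lemma smooth_min_ge: "min (x e) (y e) - flat_net e \<le> smooth_min x y e"
  using smooth_max_le[where x="\<lambda>e. - x e" and y="\<lambda>e. - y e" and e=e] by (simp add: smooth_min_def)

lemma E_sm_smooth_max [simp]:
  assumes "x \<in> E_sm" "y \<in> E_sm"
  shows "smooth_max x y \<in> E_sm"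
proof -
  have "differentiable_upto n netI (\<lambda>e. 1 / 2 * (x e + y e +
      sqrt ((x e - y e) * (x e - y e) + flat_net e * flat_net e)))" for n
    using assms E_sm_flat_net unfolding E_sm_iff
    by (intro differentiable_upto_cmult differentiable_upto_add
        differentiable_upto_compose[OF open_greaterThan differentiable_upto_sqrt]
        differentiable_upto_mult differentiable_upto_diff)
      (auto simp: add_nonneg_pos flat_net_pos)
  moreover have "moderate (smooth_max x y)"
  proof (rule moderate_le)
    show "moderate (\<lambda>e. \<bar>x e\<bar> + \<bar>y e\<bar> + flat_net e)"
      using assms E_sm_flat_net by (intro moderate_add) (auto simp: E_sm_iff)
    show "\<bar>smooth_max x y e\<bar> \<le> \<bar>x e\<bar> + \<bar>y e\<bar> + flat_net e" for e
      using max_le_smooth_max[of x e y] smooth_max_le[of x y e] flat_net_pos[of e]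
        abs_ge_self[of "x e"] abs_ge_minus_self[of "x e"] abs_ge_self[of "y e"] abs_ge_minus_self[of "y e"]
      unfolding abs_le_iff max_def by (auto split: if_splits)
  qed
  ultimately show ?thesis
    unfolding E_sm_iff smooth_max_def[abs_def] smooth_max_real_def by (simp add: power2_eq_square)
qed

lemma E_sm_smooth_min [simp]: "x \<in> E_sm \<Longrightarrow> y \<in> E_sm \<Longrightarrow> smooth_min x y \<in> E_sm"
  unfolding smooth_min_def by (intro E_sm_uminus E_sm_smooth_max)

section \<open>The quotient ring\<close>

definition negl_class :: "(real \<Rightarrow> real) set \<Rightarrow> (real \<Rightarrow> real) \<Rightarrow> (real \<Rightarrow> real) set" where
  "negl_class E r = {s. s \<in> E \<and> r \<in> E \<and> negligible (\<lambda>e. r e - s e)}"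

lemma sm_class_eq_negl_class: "sm_class = negl_class E_sm"
  by (simp add: fun_eq_iff sm_class_def negl_class_def)

lemma co_class_eq_negl_class: "co_class = negl_class E_co"
  by (simp add: fun_eq_iff co_class_def negl_class_def)

lemma mem_negl_class: "s \<in> negl_class E r \<longleftrightarrow> s \<in> E \<and> r \<in> E \<and> negligible (\<lambda>e. r e - s e)"
  by (simp add: negl_class_def)

lemma negl_class_self: "r \<in> E \<Longrightarrow> r \<in> negl_class E r"
  by (simp add: mem_negl_class)

lemma negl_class_eq_iff:
  assumes "r \<in> E" "s \<in> E"
  shows "negl_class E r = negl_class E s \<longleftrightarrow> negligible (\<lambda>e. r e - s e)"
proof
  assume "negl_class E r = negl_class E s"
  then show "negligible (\<lambda>e. r e - s e)"
    using negl_class_self[OF assms(1)]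
    by (simp add: mem_negl_class negligible_minus_commute[of s r])
next
  assume rs: "negligible (\<lambda>e. r e - s e)"
  have sr: "negligible (\<lambda>e. s e - r e)" using rs negligible_minus_commute by blast
  have "negligible (\<lambda>e. r e - t e) \<longleftrightarrow> negligible (\<lambda>e. s e - t e)" for t
    using negligible_add[OF sr, of "\<lambda>e. r e - t e"] negligible_add[OF rs, of "\<lambda>e. s e - t e"]
    by (auto simp: algebra_simps)
  then show "negl_class E r = negl_class E s"
    using assms by (auto simp: negl_class_def)
qed

lemma mem_sm_class: "s \<in> sm_class r \<longleftrightarrow> s \<in> E_sm \<and> r \<in> E_sm \<and> negligible (\<lambda>e. r e - s e)"
  by (simp add: sm_class_def)

lemma sm_class_self: "r \<in> E_sm \<Longrightarrow> r \<in> sm_class r"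
  by (simp add: sm_class_eq_negl_class negl_class_self)

lemma sm_class_eq_iff:
  "r \<in> E_sm \<Longrightarrow> s \<in> E_sm \<Longrightarrow> sm_class r = sm_class s \<longleftrightarrow> negligible (\<lambda>e. r e - s e)"
  by (simp add: sm_class_eq_negl_class negl_class_eq_iff)

lemma R_sm_cases: "X \<in> R_sm \<Longrightarrow> (\<And>a. a \<in> E_sm \<Longrightarrow> X = sm_class a \<Longrightarrow> P) \<Longrightarrow> P"
  unfolding R_sm_def by blast

lemma sm_class_in_R_sm [simp]: "a \<in> E_sm \<Longrightarrow> sm_class a \<in> R_sm"
  unfolding R_sm_def by blast

lemma UN_eq_const: "a \<in> A \<Longrightarrow> (\<And>x. x \<in> A \<Longrightarrow> F x = c) \<Longrightarrow> (\<Union>x\<in>A. F x) = c"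
  by auto

lemma sm_add_sm_class [simp]:
  assumes "a \<in> E_sm" "b \<in> E_sm"
  shows "sm_add (sm_class a) (sm_class b) = sm_class (\<lambda>e. a e + b e)"
  unfolding sm_add_def
proof (rule UN_eq_const[OF sm_class_self[OF assms(1)]], rule UN_eq_const[OF sm_class_self[OF assms(2)]])
  fix x y assume "x \<in> sm_class a" "y \<in> sm_class b"
  then have "sm_class (\<lambda>e. a e + b e) = sm_class (\<lambda>e. x e + y e)"
    using negligible_add[of "\<lambda>e. a e - x e" "\<lambda>e. b e - y e"]
    by (auto simp: sm_class_eq_iff mem_sm_class algebra_simps)
  then show "sm_class (\<lambda>e. x e + y e) = sm_class (\<lambda>e. a e + b e)" ..
qed

lemma sm_mult_sm_class [simp]:
  assumes "a \<in> E_sm" "b \<in> E_sm"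
  shows "sm_mult (sm_class a) (sm_class b) = sm_class (\<lambda>e. a e * b e)"
  unfolding sm_mult_def
proof (rule UN_eq_const[OF sm_class_self[OF assms(1)]], rule UN_eq_const[OF sm_class_self[OF assms(2)]])
  fix x y assume x: "x \<in> sm_class a" and y: "y \<in> sm_class b"
  have "negligible (\<lambda>e. (a e - x e) * b e + (b e - y e) * x e)"
    using x y assms
    by (intro negligible_add negligible_mult_moderate) (auto simp: mem_sm_class E_sm_iff)
  then have "sm_class (\<lambda>e. a e * b e) = sm_class (\<lambda>e. x e * y e)"
    using x y by (auto simp: sm_class_eq_iff mem_sm_class algebra_simps)
  then show "sm_class (\<lambda>e. x e * y e) = sm_class (\<lambda>e. a e * b e)" ..
qed

lemma ring_R_sm: "ring R_sm_ring"
proof (rule ringI)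
  show "abelian_group R_sm_ring"
  proof (rule abelian_groupI, simp_all add: R_sm_ring_def)
    show "\<And>x y. x \<in> R_sm \<Longrightarrow> y \<in> R_sm \<Longrightarrow> sm_add x y \<in> R_sm"
      by (auto elim!: R_sm_cases)
    show "\<And>x y z. x \<in> R_sm \<Longrightarrow> y \<in> R_sm \<Longrightarrow> z \<in> R_sm \<Longrightarrow>
        sm_add (sm_add x y) z = sm_add x (sm_add y z)"
      by (auto elim!: R_sm_cases simp: algebra_simps)
    show "\<And>x y. x \<in> R_sm \<Longrightarrow> y \<in> R_sm \<Longrightarrow> sm_add x y = sm_add y x"
      by (auto elim!: R_sm_cases simp: algebra_simps)
    show "\<And>x. x \<in> R_sm \<Longrightarrow> sm_add (sm_class (\<lambda>_. 0)) x = x"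
      by (auto elim!: R_sm_cases)
    show "\<exists>y\<in>R_sm. sm_add y x = sm_class (\<lambda>_. 0)" if "x \<in> R_sm" for x
    proof -
      obtain a where "a \<in> E_sm" "x = sm_class a" using \<open>x \<in> R_sm\<close> by (rule R_sm_cases)
      then show ?thesis by (intro bexI[of _ "sm_class (\<lambda>e. - a e)"]) auto
    qed
  qed
  show "monoid R_sm_ring"
    by (rule monoidI) (auto simp: R_sm_ring_def elim!: R_sm_cases simp: algebra_simps)
qed (auto simp: R_sm_ring_def elim!: R_sm_cases simp: algebra_simps)

section \<open>Order and lattice structure\<close>

text \<open>For the converse, smoothing the positive part of a - b gives a representative of [b] lying
  above a.\<close>
lemma sm_le_sm_class_iff:
  assumes a: "a \<in> E_sm" and b: "b \<in> E_sm"
  shows "sm_le (sm_class a) (sm_class b) \<longleftrightarrow> negligible (\<lambda>e. max (a e - b e) 0)"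
proof
  assume "sm_le (sm_class a) (sm_class b)"
  then obtain x y where x: "x \<in> sm_class a" and y: "y \<in> sm_class b"
    and xy: "\<forall>e\<in>netI. x e \<le> y e"
    unfolding sm_le_def by blast
  have "negligible (\<lambda>e. \<bar>a e - x e\<bar> + \<bar>b e - y e\<bar>)"
    using x y by (intro negligible_add) (simp_all add: mem_sm_class)
  moreover have "\<bar>max (a e - b e) 0\<bar> \<le> \<bar>a e - x e\<bar> + \<bar>b e - y e\<bar>" if "e \<in> netI" for e
    using xy that by (auto simp: max_def)
  ultimately show "negligible (\<lambda>e. max (a e - b e) 0)" by (rule negligible_le)
next
  assume pos: "negligible (\<lambda>e. max (a e - b e) 0)"
  define y where "y e = b e + smooth_max (\<lambda>e. a e - b e) (\<lambda>_. 0) e" for e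
  have bounds: "max (a e - b e) 0 \<le> y e - b e" "y e - b e \<le> max (a e - b e) 0 + flat_net e" for e
    using max_le_smooth_max[of "\<lambda>e. a e - b e" e "\<lambda>_. 0"]
      smooth_max_le[of "\<lambda>e. a e - b e" "\<lambda>_. 0" e]
    by (simp_all add: y_def)
  have "negligible (\<lambda>e. b e - y e)"
  proof (rule negligible_le)
    show "negligible (\<lambda>e. max (a e - b e) 0 + flat_net e)"
      by (rule negligible_add[OF pos negligible_flat_net])
    show "\<bar>b e - y e\<bar> \<le> max (a e - b e) 0 + flat_net e" for e
      using bounds[of e] by (auto simp: abs_le_iff)
  qed
  moreover have "y \<in> E_sm" using a b by (simp add: y_def[abs_def])
  moreover have "a e \<le> y e" for e using bounds(1)[of e] by simp
  ultimately show "sm_le (sm_class a) (sm_class b)"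
    unfolding sm_le_def using a b by (blast intro: sm_class_self mem_sm_class[THEN iffD2])
qed

lemma R_sm_order_simps [simp]:
  "carrier R_sm_order = R_sm" "le R_sm_order = sm_le" "eq R_sm_order = (=)"
  by (simp_all add: R_sm_order_def)

lemma sm_le_refl: "X \<in> R_sm \<Longrightarrow> sm_le X X"
  by (auto elim!: R_sm_cases simp: sm_le_sm_class_iff)

lemma sm_le_trans:
  assumes le: "sm_le X Y" "sm_le Y Z" and R: "X \<in> R_sm" "Y \<in> R_sm" "Z \<in> R_sm"
  shows "sm_le X Z"
proof -
  obtain a b c where abc: "a \<in> E_sm" "b \<in> E_sm" "c \<in> E_sm"
    and XYZ: "X = sm_class a" "Y = sm_class b" "Z = sm_class c"
    using R by (meson R_sm_cases)
  have "negligible (\<lambda>e. max (a e - b e) 0)" "negligible (\<lambda>e. max (b e - c e) 0)"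
    using le abc by (simp_all add: XYZ sm_le_sm_class_iff)
  then have "negligible (\<lambda>e. max (a e - c e) 0)"
    by (rule negligible_le[OF negligible_add]) (simp add: max_def)
  with abc show ?thesis by (simp add: XYZ sm_le_sm_class_iff)
qed

lemma sm_le_antisym:
  assumes le: "sm_le X Y" "sm_le Y X" and R: "X \<in> R_sm" "Y \<in> R_sm"
  shows "X = Y"
proof -
  obtain a b where ab: "a \<in> E_sm" "b \<in> E_sm" and XY: "X = sm_class a" "Y = sm_class b"
    using R by (meson R_sm_cases)
  have "negligible (\<lambda>e. max (a e - b e) 0)" "negligible (\<lambda>e. max (b e - a e) 0)"
    using le ab by (simp_all add: XY sm_le_sm_class_iff)
  then have "negligible (\<lambda>e. a e - b e)"
    by (rule negligible_le[OF negligible_add]) (simp add: max_def)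
  with ab show ?thesis by (simp add: XY sm_class_eq_iff)
qed

lemma partial_order_R_sm: "partial_order R_sm_order"
  by unfold_locales (auto simp: sm_le_refl sm_le_antisym elim: sm_le_trans)

lemma sm_le_add_right:
  assumes "A \<in> R_sm" "B \<in> R_sm" "C \<in> R_sm" "sm_le A B"
  shows "sm_le (sm_add A C) (sm_add B C)"
  using assms by (auto elim!: R_sm_cases simp: sm_le_sm_class_iff)

lemma neg_part_mult_le: "max (- (p * q)) 0 \<le> \<bar>p\<bar> * max (- q) 0 + max (- p) 0 * \<bar>q :: real\<bar>"
  by (cases "0 \<le> p"; cases "0 \<le> q") (simp_all add: max_def mult_le_0_iff zero_le_mult_iff)

lemma sm_le_zero_mult:
  assumes "A \<in> R_sm" "B \<in> R_sm" "sm_le (sm_class (\<lambda>_. 0)) A" "sm_le (sm_class (\<lambda>_. 0)) B"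
  shows "sm_le (sm_class (\<lambda>_. 0)) (sm_mult A B)"
proof -
  obtain a b where ab: "a \<in> E_sm" "b \<in> E_sm" and AB: "A = sm_class a" "B = sm_class b"
    using assms(1,2) by (blast elim: R_sm_cases)
  have "negligible (\<lambda>e. max (- a e) 0)" "negligible (\<lambda>e. max (- b e) 0)"
    using assms(3,4) ab by (simp_all add: AB sm_le_sm_class_iff)
  then have "negligible (\<lambda>e. \<bar>a e\<bar> * max (- b e) 0 + max (- a e) 0 * \<bar>b e\<bar>)"
    using ab by (auto simp: E_sm_iff mult.commute[of "\<bar>a _\<bar>"]
        intro!: negligible_add negligible_mult_moderate)
  then have "negligible (\<lambda>e. max (- (a e * b e)) 0)"
    by (rule negligible_le) (simp only: abs_of_nonneg[OF max.cobounded2] neg_part_mult_le)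
  with ab show ?thesis by (simp add: AB sm_le_sm_class_iff)
qed

lemma least_sm_class_smooth_max:
  assumes "x \<in> E_sm" "y \<in> E_sm"
  shows "least R_sm_order (sm_class (smooth_max x y)) (Upper R_sm_order {sm_class x, sm_class y})"
proof -
  have upper: "negligible (\<lambda>e. max (u e - smooth_max x y e) 0)" if "u = x \<or> u = y" for u
    using that max_le_smooth_max[of x _ y] by (auto intro: negligible_le[OF negligible_zero])
  have "negligible (\<lambda>e. max (smooth_max x y e - z e) 0)"
    if "negligible (\<lambda>e. max (x e - z e) 0)" "negligible (\<lambda>e. max (y e - z e) 0)" for z
  proof (rule negligible_le)
    show "negligible (\<lambda>e. max (x e - z e) 0 + max (y e - z e) 0 + flat_net e)"
      using that by (intro negligible_add negligible_flat_net)
    show "\<bar>max (smooth_max x y e - z e) 0\<bar> \<le> max (x e - z e) 0 + max (y e - z e) 0 + flat_net e" for e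
      using smooth_max_le[of x y e] flat_net_pos[of e] by (auto simp: max_def split: if_splits)
  qed
  with upper assms show ?thesis
    by (auto simp: least_def Upper_def sm_le_sm_class_iff elim!: R_sm_cases)
qed

lemma greatest_sm_class_smooth_min:
  assumes "x \<in> E_sm" "y \<in> E_sm"
  shows "greatest R_sm_order (sm_class (smooth_min x y)) (Lower R_sm_order {sm_class x, sm_class y})"
proof -
  have lower: "negligible (\<lambda>e. max (smooth_min x y e - u e) 0)" if "u = x \<or> u = y" for u
    using that smooth_min_le_min[of x y] by (auto intro: negligible_le[OF negligible_zero])
  have "negligible (\<lambda>e. max (z e - smooth_min x y e) 0)"
    if "negligible (\<lambda>e. max (z e - x e) 0)" "negligible (\<lambda>e. max (z e - y e) 0)" for z
  proof (rule negligible_le)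
    show "negligible (\<lambda>e. max (z e - x e) 0 + max (z e - y e) 0 + flat_net e)"
      using that by (intro negligible_add negligible_flat_net)
    show "\<bar>max (z e - smooth_min x y e) 0\<bar> \<le> max (z e - x e) 0 + max (z e - y e) 0 + flat_net e" for e
      using smooth_min_ge[of x e y] flat_net_pos[of e] by (auto simp: max_def min_def split: if_splits)
  qed
  with lower assms show ?thesis
    by (auto simp: greatest_def Lower_def sm_le_sm_class_iff elim!: R_sm_cases)
qed

lemma lattice_R_sm: "lattice R_sm_order"
proof -
  interpret partial_order R_sm_order by (rule partial_order_R_sm)
  show ?thesis
    by unfold_locales
      (auto elim!: R_sm_cases intro: least_sm_class_smooth_max greatest_sm_class_smooth_min)
qed

lemma join_R_sm:
  assumes "x \<in> E_sm" "y \<in> E_sm"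
  shows "join R_sm_order (sm_class x) (sm_class y) = sm_class (smooth_max x y)"
proof -
  interpret lattice R_sm_order by (rule lattice_R_sm)
  show ?thesis
  proof (rule joinI[where P="\<lambda>l. l = sm_class (smooth_max x y)"])
    show "l = sm_class (smooth_max x y)" if "least R_sm_order l (Upper R_sm_order {sm_class x, sm_class y})" for l
      using least_unique[OF that least_sm_class_smooth_max[OF assms]] .
  qed (use assms in simp_all)
qed

lemma meet_R_sm:
  assumes "x \<in> E_sm" "y \<in> E_sm"
  shows "meet R_sm_order (sm_class x) (sm_class y) = sm_class (smooth_min x y)"
proof -
  interpret lattice R_sm_order by (rule lattice_R_sm)
  show ?thesis
  proof (rule meetI[where P="\<lambda>l. l = sm_class (smooth_min x y)"])
    show "l = sm_class (smooth_min x y)"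
      if "greatest R_sm_order l (Lower R_sm_order {sm_class x, sm_class y})" for l
      using greatest_unique[OF that greatest_sm_class_smooth_min[OF assms]] .
  qed (use assms in simp_all)
qed

section \<open>Join and meet through the continuous quotient\<close>

lemma E_co_max:
  assumes "x \<in> E_co" "y \<in> E_co"
  shows "(\<lambda>e. max (x e) (y e)) \<in> E_co"
proof -
  have "moderate (\<lambda>e. \<bar>x e\<bar> + \<bar>y e\<bar>)"
    using assms by (intro moderate_add) (simp_all add: E_co_def)
  then have "moderate (\<lambda>e. max (x e) (y e))"
    by (rule moderate_le) (simp add: max_def abs_if)
  with assms show ?thesis by (simp add: E_co_def cont_net_def continuous_on_max)
qed

lemma E_co_min:
  assumes "x \<in> E_co" "y \<in> E_co"
  shows "(\<lambda>e. min (x e) (y e)) \<in> E_co"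
proof -
  have "moderate (\<lambda>e. \<bar>x e\<bar> + \<bar>y e\<bar>)"
    using assms by (intro moderate_add) (simp_all add: E_co_def)
  then have "moderate (\<lambda>e. min (x e) (y e))"
    by (rule moderate_le) (simp add: min_def abs_if)
  with assms show ?thesis by (simp add: E_co_def cont_net_def continuous_on_min)
qed

lemma tau_sm_sm_class: "a \<in> E_sm \<Longrightarrow> tau_sm (sm_class a) = co_class a"
  unfolding tau_sm_def
proof (rule UN_eq_const[OF sm_class_self])
  fix x assume "a \<in> E_sm" "x \<in> sm_class a"
  then have "x \<in> E_co" "a \<in> E_co" "negligible (\<lambda>e. x e - a e)"
    using E_sm_subset_E_co by (auto simp: mem_sm_class negligible_minus_commute[of x a])
  then show "co_class x = co_class a" by (simp add: co_class_eq_negl_class negl_class_eq_iff)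
qed

lemma inj_on_tau_sm: "inj_on tau_sm R_sm"
proof (rule inj_onI)
  fix X Y assume "X \<in> R_sm" "Y \<in> R_sm" and eq: "tau_sm X = tau_sm Y"
  obtain a where a: "a \<in> E_sm" "X = sm_class a" using \<open>X \<in> R_sm\<close> by (rule R_sm_cases)
  obtain b where b: "b \<in> E_sm" "Y = sm_class b" using \<open>Y \<in> R_sm\<close> by (rule R_sm_cases)
  have "a \<in> E_co" "b \<in> E_co" using a b E_sm_subset_E_co by auto
  with eq a b show "X = Y"
    by (simp add: tau_sm_sm_class co_class_eq_negl_class negl_class_eq_iff sm_class_eq_iff)
qed

lemma the_inv_into_tau_sm: "m \<in> E_sm \<Longrightarrow> the_inv_into R_sm tau_sm (co_class m) = sm_class m"
  by (simp add: the_inv_into_f_eq[OF inj_on_tau_sm] tau_sm_sm_class)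

lemma UN_co_class_lipschitz:
  assumes lip: "\<And>a b a' b'. \<bar>F a b - F a' b'\<bar> \<le> \<bar>a - a'\<bar> + \<bar>b - b'\<bar>"
    and co: "\<And>x y. x \<in> E_co \<Longrightarrow> y \<in> E_co \<Longrightarrow> (\<lambda>e. F (x e) (y e)) \<in> E_co"
    and x: "x \<in> E_sm" and y: "y \<in> E_sm"
  shows "(\<Union>x'\<in>sm_class x. \<Union>y'\<in>sm_class y. co_class (\<lambda>e. F (x' e) (y' e)))
    = co_class (\<lambda>e. F (x e) (y e))"
proof (rule UN_eq_const[OF sm_class_self[OF x]], rule UN_eq_const[OF sm_class_self[OF y]])
  fix x' y' assume x': "x' \<in> sm_class x" and y': "y' \<in> sm_class y"
  have "negligible (\<lambda>e. \<bar>x e - x' e\<bar> + \<bar>y e - y' e\<bar>)"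
    using x' y' by (intro negligible_add) (simp_all add: mem_sm_class)
  then have "negligible (\<lambda>e. F (x e) (y e) - F (x' e) (y' e))"
    by (rule negligible_le) (rule lip)
  moreover have "x \<in> E_co" "y \<in> E_co" "x' \<in> E_co" "y' \<in> E_co"
    using x y x' y' E_sm_subset_E_co by (auto simp: mem_sm_class)
  ultimately have "co_class (\<lambda>e. F (x e) (y e)) = co_class (\<lambda>e. F (x' e) (y' e))"
    by (simp add: co_class_eq_negl_class negl_class_eq_iff co)
  then show "co_class (\<lambda>e. F (x' e) (y' e)) = co_class (\<lambda>e. F (x e) (y e))" ..
qed

lemma sm_max_sm_class:
  assumes "x \<in> E_sm" "y \<in> E_sm"
  shows "sm_max (sm_class x) (sm_class y) = sm_class (smooth_max x y)"
proof -
  have "\<bar>max (x e) (y e) - smooth_max x y e\<bar> \<le> flat_net e" for e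
    unfolding abs_le_iff using max_le_smooth_max[of x e y] smooth_max_le[of x y e] flat_net_pos[of e]
    by (intro conjI) linarith+
  then have "negligible (\<lambda>e. max (x e) (y e) - smooth_max x y e)"
    by (rule negligible_le[OF negligible_flat_net])
  moreover have "x \<in> E_co" "y \<in> E_co" using assms E_sm_subset_E_co by auto
  ultimately have "co_class (\<lambda>e. max (x e) (y e)) = co_class (smooth_max x y)"
    using assms E_sm_subset_E_co by (simp add: co_class_eq_negl_class negl_class_eq_iff E_co_max subsetD)
  moreover have "(\<Union>x'\<in>sm_class x. \<Union>y'\<in>sm_class y. co_class (\<lambda>e. max (x' e) (y' e)))
      = co_class (\<lambda>e. max (x e) (y e))"
    by (rule UN_co_class_lipschitz[OF _ E_co_max assms]) (simp add: max_def abs_if)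
  ultimately show ?thesis
    using assms by (simp add: sm_max_def the_inv_into_tau_sm)
qed

lemma sm_min_sm_class:
  assumes "x \<in> E_sm" "y \<in> E_sm"
  shows "sm_min (sm_class x) (sm_class y) = sm_class (smooth_min x y)"
proof -
  have "\<bar>min (x e) (y e) - smooth_min x y e\<bar> \<le> flat_net e" for e
    unfolding abs_le_iff using smooth_min_le_min[of x y e] smooth_min_ge[of x e y] flat_net_pos[of e]
    by (intro conjI) linarith+
  then have "negligible (\<lambda>e. min (x e) (y e) - smooth_min x y e)"
    by (rule negligible_le[OF negligible_flat_net])
  moreover have "x \<in> E_co" "y \<in> E_co" using assms E_sm_subset_E_co by auto
  ultimately have "co_class (\<lambda>e. min (x e) (y e)) = co_class (smooth_min x y)"
    using assms E_sm_subset_E_co by (simp add: co_class_eq_negl_class negl_class_eq_iff E_co_min subsetD)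
  moreover have "(\<Union>x'\<in>sm_class x. \<Union>y'\<in>sm_class y. co_class (\<lambda>e. min (x' e) (y' e)))
      = co_class (\<lambda>e. min (x e) (y e))"
    by (rule UN_co_class_lipschitz[OF _ E_co_min assms]) (simp add: min_def abs_if)
  ultimately show ?thesis
    using assms by (simp add: sm_min_def the_inv_into_tau_sm)
qed

theorem proposition4p13:
  shows "ring R_sm_ring
    \<and> partial_order R_sm_order
    \<and> (\<forall>a\<in>R_sm. \<forall>b\<in>R_sm. \<forall>c\<in>R_sm. sm_le a b \<longrightarrow> sm_le (sm_add a c) (sm_add b c))
    \<and> (\<forall>a\<in>R_sm. \<forall>b\<in>R_sm. sm_le (sm_class (\<lambda>_. 0)) a \<and> sm_le (sm_class (\<lambda>_. 0)) b
          \<longrightarrow> sm_le (sm_class (\<lambda>_. 0)) (sm_mult a b))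
    \<and> lattice R_sm_order
    \<and> (\<forall>r\<in>R_sm. \<forall>s\<in>R_sm. join R_sm_order r s = sm_max r s \<and> meet R_sm_order r s = sm_min r s)"
  using ring_R_sm partial_order_R_sm sm_le_add_right sm_le_zero_mult lattice_R_sm
  by (auto elim!: R_sm_cases simp: join_R_sm meet_R_sm sm_max_sm_class sm_min_sm_class)

end
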